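(* Let $1\le m<n$. (a) If $m=1$, then for every $A\in\mathbb R^{1\times n}$ and all $0<p,q\le\infty$: $\mathrm{pginv}_{\mathrm{col}(p,q)}(A)=\mathrm{ginv}_p(A)$; consequently there is a full-rank $A_1\in\mathbb R^{1\times n}$ with $A_1^\dagger\in\mathrm{pginv}_{\mathrm{col}(p,q)}(A_1)\iff p=2$ for $0<p<\infty$, $0<q\le\infty$. (b) If $m\ge 2$, there exists a full-rank $A_4\in\mathbb R^{m\times n}$ such that for all $1\le p<\infty$ and $0<q<\infty$: $A_4^\dagger\in\mathrm{pginv}_{\mathrm{col}(p,q)}(A_4)\iff p=2$.
   Context: Generalized inverses are taken real: $\mathcal G(A)=\{X\in\mathbb R^{n\times m}:AX=I_m\}$, $\mathrm{ginv}_\nu(A)=\arg\min_{X\in\mathcal G(A)}\|X\|_\nu$, $\mathrm{pginv}_\mu(A)=\arg\min_{X\in\mathcal G(A)}\|XA\|_\mu$ (sets). For $M$ with columns $m_j$, $\|M\|_{\mathrm{col}(p,q)}=(\sum_j\|m_j\|_p^q)^{1/q}$ (maximum for $q=\infty$); entrywise $\|M\|_p=\|\mathrm{vec}(M)\|_p$. $A^\dagger=A^\top(AA^\top)^{-1}$. *)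

theory Defs
  imports "HOL-Analysis.Analysis"
begin

text \<open>Matrices: an m x n real matrix is an element of real^'n^'m (rows indexed by 'm).\<close>

definition vnorm :: "ereal \<Rightarrow> real^'k \<Rightarrow> real" where
  "vnorm p x = (if p = \<infinity> then Max (range (\<lambda>i. \<bar>x $ i\<bar>))
      else (\<Sum>i\<in>UNIV. \<bar>x $ i\<bar> powr real_of_ereal p) powr (1 / real_of_ereal p))"

definition colnorm :: "ereal \<Rightarrow> ereal \<Rightarrow> real^'c^'r \<Rightarrow> real" where
  "colnorm p q M = (if q = \<infinity> then Max (range (\<lambda>j. vnorm p (column j M)))
      else (\<Sum>j\<in>UNIV. vnorm p (column j M) powr real_of_ereal q) powr (1 / real_of_ereal q))"

definition entnorm :: "ereal \<Rightarrow> real^'c^'r \<Rightarrow> real" where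
  "entnorm p M = (if p = \<infinity> then Max (range (\<lambda>(i,j). \<bar>M $ i $ j\<bar>))
      else (\<Sum>(i,j)\<in>UNIV. \<bar>M $ i $ j\<bar> powr real_of_ereal p) powr (1 / real_of_ereal p))"

definition ginvs :: "real^'n^'m \<Rightarrow> (real^'m^'n) set" where
  "ginvs A = {X. A ** X = mat 1}"

definition ginv :: "(real^'m^'n \<Rightarrow> real) \<Rightarrow> real^'n^'m \<Rightarrow> (real^'m^'n) set" where
  "ginv nu A = {X \<in> ginvs A. \<forall>Y \<in> ginvs A. nu X \<le> nu Y}"

definition pginv :: "(real^'n^'n \<Rightarrow> real) \<Rightarrow> real^'n^'m \<Rightarrow> (real^'m^'n) set" where
  "pginv mu A = {X \<in> ginvs A. \<forall>Y \<in> ginvs A. mu (X ** A) \<le> mu (Y ** A)}"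

text \<open>Moore-Penrose pseudoinverse for full row rank: A^T (A A^T)^{-1}.\<close>
definition pinv :: "real^'n^'m \<Rightarrow> real^'m^'n" where
  "pinv A = transpose A ** matrix_inv (A ** transpose A)"

end

theory Submission
  imports Defs
begin

text \<open>
  If \<open>A\<close> is a single row \<open>a\<close>, the \<open>j\<close>-th column of \<open>X A\<close> is \<open>a\<^sub>j X\<close>.
  For p = 2, \<open>A\<^sup>\<dagger> A v\<close> is the least Euclidean norm solution of \<open>A z = A v\<close>, so \<open>A\<^sup>\<dagger>\<close>
  minimises every column of \<open>X A\<close> simultaneously.
  For p \<noteq> 2 take \<open>A = [I | 2e\<^sub>1 | 0]\<close>. The columns of \<open>A\<^sup>\<dagger> A\<close> that meet the first row
  are multiples of \<open>x = (1/5, 2/5)\<close> (on coordinates \<open>1, m + 1\<close>), and moving \<open>x\<close> along the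
  null direction \<open>(2, -1)\<close> of \<open>A\<close> changes the p-th power of its p-norm at the rate
  \<open>p 5\<^sup>1\<^sup>-\<^sup>p (2 - 2\<^sup>p\<^sup>-\<^sup>1) \<noteq> 0\<close>; perturbing the first column of \<open>A\<^sup>\<dagger>\<close> accordingly gives a
  generalized inverse with strictly smaller objective.
\<close>

lemma vnorm_nonneg: "0 \<le> vnorm p x"
proof (cases "p = \<infinity>")
  case True
  have "\<bar>x $ i\<bar> \<le> Max (range (\<lambda>i. \<bar>x $ i\<bar>))" for i by (rule Max_ge) auto
  then have "0 \<le> Max (range (\<lambda>i. \<bar>x $ i\<bar>))" by (meson abs_ge_zero order_trans)
  then show ?thesis using True unfolding vnorm_def by simp
qed (simp add: vnorm_def)

lemma vnorm_pos:
  assumes "0 < p" "x $ i \<noteq> 0"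
  shows "0 < vnorm p x"
proof (cases "p = \<infinity>")
  case True
  have "\<bar>x $ i\<bar> \<le> Max (range (\<lambda>i. \<bar>x $ i\<bar>))" by (rule Max_ge) auto
  moreover have "0 < \<bar>x $ i\<bar>" using assms(2) by simp
  ultimately have "0 < Max (range (\<lambda>i. \<bar>x $ i\<bar>))" by linarith
  then show ?thesis using True unfolding vnorm_def by simp
next
  case False
  have "0 < (\<Sum>i\<in>UNIV. \<bar>x $ i\<bar> powr real_of_ereal p)"
    by (rule sum_pos2[of _ i]) (use assms in auto)
  then show ?thesis using False unfolding vnorm_def by simp
qed

lemma real_of_ereal_pos_finite: "0 < p \<Longrightarrow> p \<noteq> \<infinity> \<Longrightarrow> 0 < real_of_ereal p"
  by (cases p) auto

lemma Max_range_mult_left: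
  fixes f :: "'a::finite \<Rightarrow> real"
  assumes "0 \<le> c"
  shows "Max (range (\<lambda>i. c * f i)) = c * Max (range f)"
proof -
  have "mono ((*) c)" using assms by (simp add: mono_def mult_left_mono)
  then have "c * Max (range f) = Max ((*) c ` range f)"
    by (intro mono_Max_commute) auto
  then show ?thesis by (simp add: image_image)
qed

lemma vnorm_scale:
  assumes "0 < p"
  shows "vnorm p (c *s x) = \<bar>c\<bar> * vnorm p x"
proof (cases "p = \<infinity>")
  case True
  then show ?thesis unfolding vnorm_def by (simp add: abs_mult Max_range_mult_left)
next
  case False
  define P where "P = real_of_ereal p"
  have P: "0 < P" using real_of_ereal_pos_finite[OF assms False] P_def by simp
  have "vnorm p (c *s x) = (\<bar>c\<bar> powr P * (\<Sum>i\<in>UNIV. \<bar>x $ i\<bar> powr P)) powr (1/P)"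
    using False unfolding vnorm_def P_def by (simp add: abs_mult powr_mult sum_distrib_left)
  also have "\<dots> = (\<bar>c\<bar> powr P) powr (1/P) * (\<Sum>i\<in>UNIV. \<bar>x $ i\<bar> powr P) powr (1/P)"
    by (rule powr_mult)
  also have "(\<bar>c\<bar> powr P) powr (1/P) = \<bar>c\<bar>" using P by (simp add: powr_powr)
  finally show ?thesis using False unfolding vnorm_def P_def by simp
qed

lemma vnorm_2_eq_norm: "vnorm 2 x = norm x"
  by (simp add: vnorm_def norm_vec_def L2_set_def powr_half_sqrt sum_nonneg)

lemma vnorm_two_point_support:
  assumes "a \<noteq> b" "\<And>r. r \<noteq> a \<Longrightarrow> r \<noteq> b \<Longrightarrow> v $ r = 0" "p \<noteq> \<infinity>"
  shows "vnorm p v =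
    (\<bar>v $ a\<bar> powr real_of_ereal p + \<bar>v $ b\<bar> powr real_of_ereal p) powr (1 / real_of_ereal p)"
proof -
  have "(\<Sum>i\<in>UNIV. \<bar>v $ i\<bar> powr real_of_ereal p) = (\<Sum>i\<in>{a,b}. \<bar>v $ i\<bar> powr real_of_ereal p)"
    by (rule sum.mono_neutral_right) (use assms in auto)
  then show ?thesis using assms unfolding vnorm_def by simp
qed

lemma colnorm_eq_vnorm: "colnorm p q M = vnorm q (\<chi> j. vnorm p (column j M))"
  by (simp add: colnorm_def vnorm_def[of q] abs_of_nonneg vnorm_nonneg)

lemma colnorm_mono:
  assumes "0 < q" "\<And>j. vnorm p (column j M) \<le> vnorm p (column j N)"
  shows "colnorm p q M \<le> colnorm p q N"
proof (cases "q = \<infinity>")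
  case True
  have "vnorm p (column j M) \<le> Max (range (\<lambda>j. vnorm p (column j N)))" for j
    by (rule order_trans[OF assms(2)], rule Max_ge) auto
  then show ?thesis using True unfolding colnorm_def by (simp add: Max.boundedI)
next
  case False
  then have "0 < real_of_ereal q" using real_of_ereal_pos_finite assms(1) by blast
  then show ?thesis unfolding colnorm_def using False
    by (auto intro!: powr_mono2 sum_mono sum_nonneg assms(2) vnorm_nonneg)
qed

lemma colnorm_strict_mono:
  assumes "0 < q" "q \<noteq> \<infinity>" "\<And>j. vnorm p (column j M) \<le> vnorm p (column j N)"
    and "vnorm p (column k M) < vnorm p (column k N)"
  shows "colnorm p q M < colnorm p q N"
proof -
  define Q where "Q = real_of_ereal q"
  have Q: "0 < Q" using real_of_ereal_pos_finite assms Q_def by blast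
  have "(\<Sum>j\<in>UNIV. vnorm p (column j M) powr Q) < (\<Sum>j\<in>UNIV. vnorm p (column j N) powr Q)"
  proof (rule sum_strict_mono_ex1)
    show "\<forall>j\<in>UNIV. vnorm p (column j M) powr Q \<le> vnorm p (column j N) powr Q"
      using Q assms(3) vnorm_nonneg by (auto intro!: powr_mono2)
    show "\<exists>j\<in>UNIV. vnorm p (column j M) powr Q < vnorm p (column j N) powr Q"
      using Q assms(4) vnorm_nonneg by (intro bexI[of _ k]) (auto intro: powr_less_mono2)
  qed simp
  then show ?thesis unfolding colnorm_def Q_def using assms(2) Q Q_def
    by (simp add: powr_less_mono2 sum_nonneg)
qed

lemma column_matrix_mult: "column j (X ** A) = X *v column j A"
  by (simp add: vec_eq_iff column_def matrix_matrix_mult_def matrix_vector_mult_def)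

lemma column_matrix_mult_single_row:
  fixes A :: "'a::comm_semiring_1^'n^'m"
  assumes "\<And>i. i \<noteq> i0 \<Longrightarrow> A $ i $ j = 0"
  shows "column j (X ** A) = A $ i0 $ j *s column i0 X"
proof -
  have "(\<Sum>i\<in>UNIV. X $ r $ i * A $ i $ j) = A $ i0 $ j * X $ r $ i0" for r
    by (subst sum.remove[of _ i0]) (use assms in \<open>auto simp: mult.commute\<close>)
  then show ?thesis by (simp add: vec_eq_iff column_def matrix_matrix_mult_def)
qed

lemma single_column_matrix_mult_vector:
  "(\<chi> r i. if i = i0 then d $ r else 0) *v v = v $ i0 *s (d :: 'a::comm_semiring_1^'n)"
  by (simp add: vec_eq_iff matrix_vector_mult_def if_distrib[where f = "\<lambda>a. a * _"] cong: if_cong)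
    (simp add: mult.commute)

lemma column_add_single_column_mult:
  fixes A :: "'a::comm_semiring_1^'n^'m"
  shows "column j ((X + (\<chi> r i. if i = i0 then d $ r else 0)) ** A) = column j (X ** A) + A $ i0 $ j *s d"
  unfolding column_matrix_mult matrix_vector_mult_add_rdistrib single_column_matrix_mult_vector
  by (simp add: column_def)

lemma right_inverse_add_null_column:
  fixes A :: "'a::comm_ring_1^'n^'m"
  assumes "A ** X = mat 1" "A *v d = 0"
  shows "A ** (X + (\<chi> r i. if i = i0 then d $ r else 0)) = mat 1"
proof -
  have "(A ** (\<chi> r i. if i = i0 then d $ r else 0)) $ r $ i = (if i = i0 then (A *v d) $ r else 0)" for r i
    by (cases "i = i0") (simp_all add: matrix_matrix_mult_def matrix_vector_mult_def)
  then show ?thesis using assms by (simp add: matrix_add_ldistrib vec_eq_iff)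
qed

lemma diagonal_matrix_mult:
  "(\<chi> i i'. if i = i' then c i else 0) ** (\<chi> i i'. if i = i' then d i else 0)
    = (\<chi> i i'. if i = i' then c i * d i else (0::'a::semiring_1))"
proof -
  have "(if i = l then c i else 0) * (if l = i' then d l else 0)
      = (if l = i then (if i = i' then c i * d i else 0) else (0::'a))" for i l i'
    by auto
  then show ?thesis by (simp add: vec_eq_iff matrix_matrix_mult_def)
qed

lemma matrix_inv_eq:
  fixes D :: "'a::comm_ring_1^'n^'n"
  assumes "D ** E = mat 1" "E ** D = mat 1"
  shows "matrix_inv D = E"
proof -
  have inv: "D ** matrix_inv D = mat 1 \<and> matrix_inv D ** D = mat 1"
    unfolding matrix_inv_def using assms by (rule someI[where x = E, OF conjI])
  then have "matrix_inv D = matrix_inv D ** (D ** E)" using assms by simp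
  also have "\<dots> = E" using inv by (simp add: matrix_mul_assoc)
  finally show ?thesis .
qed

lemma powr_sum_not_minimal_on_line:
  fixes a P :: real
  assumes "0 < a" "0 < P" "P \<noteq> 2"
  obtains t where "\<bar>a + 2 * t\<bar> powr P + \<bar>2 * a - t\<bar> powr P < a powr P + (2 * a) powr P"
proof -
  define h where "h t = (a + 2 * t) powr P + (2 * a - t) powr P" for t
  define l where "l = 2 * (P * a powr (P - 1)) - P * (2 * a) powr (P - 1)"
  have "(h has_real_derivative l) (at 0)"
    unfolding h_def l_def using assms(1) by (auto intro!: derivative_eq_intros)
  moreover have "l \<noteq> 0"
  proof -
    have "l = P * a powr (P - 1) * (2 powr 1 - 2 powr (P - 1))"
      unfolding l_def using assms(1) by (simp add: powr_mult algebra_simps)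
    moreover have "2 powr (P - 1) \<noteq> (2::real) powr 1" using assms(3) powr_inj[of 2 "P - 1" 1] by auto
    ultimately show ?thesis using assms(1,2) by simp
  qed
  ultimately obtain t where t: "\<bar>0 - t\<bar> < a / 2" "h t < h 0"
    using DERIV_local_min[of h l 0 "a / 2"] assms(1) by force
  then show ?thesis using assms(1) by (intro that[of t]) (simp add: h_def)
qed

lemma UNIV_eq_singleton_if_card_1:
  assumes "CARD('a) = 1"
  shows "UNIV = {i :: 'a}"
proof -
  obtain i' :: 'a where "UNIV = {i'}" using card_1_singletonE[OF assms] .
  then show ?thesis by (metis UNIV_I singletonD)
qed

lemma entnorm_single_row:
  fixes X :: "real^'m^'n"
  assumes "CARD('m) = 1"
  shows "entnorm p X = vnorm p (column i X)"
proof -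
  have UNIV_m: "UNIV = {i}" by (rule UNIV_eq_singleton_if_card_1[OF assms])
  have "range (\<lambda>(r, c). \<bar>X $ r $ c\<bar>) = range (\<lambda>r. \<bar>column i X $ r\<bar>)"
    using UNIV_m by (force simp: column_def image_iff)
  moreover have "(\<Sum>(r, c)\<in>UNIV. \<bar>X $ r $ c\<bar> powr e) = (\<Sum>r\<in>UNIV. \<bar>column i X $ r\<bar> powr e)" for e
    by (simp add: UNIV_Times_UNIV[symmetric] sum.cartesian_product[symmetric] UNIV_m column_def
        del: UNIV_Times_UNIV)
  ultimately show ?thesis unfolding entnorm_def vnorm_def by simp
qed

lemma colnorm_mult_single_row:
  fixes X :: "real^'m^'n" and A :: "real^'n^'m"
  assumes "CARD('m) = 1" "0 < p" "0 < q"
  shows "colnorm p q (X ** A) = vnorm p (column i X) * vnorm q (row i A)"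
proof -
  have col: "column j (X ** A) = A $ i $ j *s column i X" for j
    using UNIV_eq_singleton_if_card_1[OF assms(1), of i] by (intro column_matrix_mult_single_row) auto
  have "(\<chi> j. vnorm p (column j (X ** A))) = vnorm p (column i X) *s (\<chi> j. \<bar>row i A $ j\<bar>)"
    using assms(2) by (simp add: col vec_eq_iff vnorm_scale row_def mult.commute)
  then show ?thesis
    using assms(3) by (simp add: colnorm_eq_vnorm vnorm_scale vnorm_nonneg) (simp add: vnorm_def)
qed

lemma pginv_colnorm_single_row:
  fixes A :: "real^'n^'m"
  assumes "CARD('m) = 1" "0 < p" "0 < q"
  shows "pginv (colnorm p q) A = ginv (entnorm p) A"
proof -
  fix i :: 'm
  have row_norm_pos: "0 < vnorm q (row i A)" if "X \<in> ginvs A" for X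
  proof -
    have "(A ** X) $ i $ i = 1" using that by (simp add: ginvs_def mat_def)
    then have "A $ i \<noteq> 0" by (auto simp: matrix_matrix_mult_def)
    then obtain j where "A $ i $ j \<noteq> 0" by (auto simp: vec_eq_iff)
    then show ?thesis using assms(3) by (intro vnorm_pos[of _ _ j]) (auto simp: row_def)
  qed
  show ?thesis
    unfolding pginv_def ginv_def colnorm_mult_single_row[OF assms, where i = i]
      entnorm_single_row[OF assms(1), where i = i]
    using row_norm_pos by auto
qed

lemma pinv_least_norm_solution:
  fixes A :: "real^'n^'m"
  assumes "A ** pinv A = mat 1" "A *v z = u"
  shows "norm (pinv A *v u) \<le> norm z"
proof -
  define e where "e = z - pinv A *v u"
  have "A *v e = 0"
    using assms by (simp add: e_def matrix_vector_mult_diff_distrib matrix_vector_mul_assoc)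
  moreover have "pinv A *v u = transpose A *v (matrix_inv (A ** transpose A) *v u)"
    by (simp add: pinv_def matrix_vector_mul_assoc)
  ultimately have orth: "inner (pinv A *v u) e = 0"
    by (simp add: dot_lmul_matrix)
  have "z = pinv A *v u + e" by (simp add: e_def)
  then have "(norm z)\<^sup>2 = (norm (pinv A *v u))\<^sup>2 + (norm e)\<^sup>2"
    using orth by (simp add: power2_norm_eq_inner inner_add_left inner_add_right inner_commute)
  then have "(norm (pinv A *v u))\<^sup>2 \<le> (norm z)\<^sup>2" by simp
  then show ?thesis by (simp add: power_mono_iff)
qed

lemma pinv_in_pginv_colnorm_2:
  fixes A :: "real^'n^'m"
  assumes "A ** pinv A = mat 1" "0 < q"
  shows "pinv A \<in> pginv (colnorm 2 q) A"
  unfolding pginv_def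
proof (intro CollectI conjI ballI)
  show "pinv A \<in> ginvs A" using assms(1) by (simp add: ginvs_def)
  fix Y assume "Y \<in> ginvs A"
  then have "A *v (Y *v column j A) = column j A" for j
    by (simp add: ginvs_def matrix_vector_mul_assoc)
  then have "norm (pinv A *v column j A) \<le> norm (Y *v column j A)" for j
    using pinv_least_norm_solution[OF assms(1)] by blast
  then show "colnorm 2 q (pinv A ** A) \<le> colnorm 2 q (Y ** A)"
    by (intro colnorm_mono[OF assms(2)]) (simp only: column_matrix_mult vnorm_2_eq_norm)
qed

text \<open>For \<open>f\<close> the inclusion of the first \<open>m\<close> coordinates, \<open>k = m + 1\<close> and \<open>i0 = 1\<close> this is
  \<open>[I | 2e\<^sub>1 | 0]\<close>.\<close>
definition spike_matrix :: "('m \<Rightarrow> 'n) \<Rightarrow> 'n \<Rightarrow> 'm \<Rightarrow> real^'n^'m" where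
  "spike_matrix f k i0 = (\<chi> i j. (if j = f i then 1 else 0) + (if i = i0 \<and> j = k then 2 else 0))"

locale spike =
  fixes f :: "'m::finite \<Rightarrow> 'n::finite" and k :: 'n and i0 :: 'm
  assumes inj_f: "inj f" and k_not_in_range: "k \<notin> range f"
begin

abbreviation A :: "real^'n^'m" where "A \<equiv> spike_matrix f k i0"

lemma A_nth_f: "A $ i $ f i' = (if i = i' then 1 else 0)"
  using k_not_in_range inj_f by (auto simp: spike_matrix_def inj_eq)

lemma A_nth_k: "A $ i $ k = (if i = i0 then 2 else 0)"
  using k_not_in_range by (auto simp: spike_matrix_def)

lemma A_nth_other: "j \<notin> range f \<Longrightarrow> j \<noteq> k \<Longrightarrow> A $ i $ j = 0"
  by (auto simp: spike_matrix_def)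

lemma A_column_single_row:
  assumes "A $ i0 $ j \<noteq> 0" "i \<noteq> i0"
  shows "A $ i $ j = 0"
proof (cases "j \<in> range f")
  case True
  then show ?thesis using assms by (auto simp: A_nth_f)
next
  case False
  then show ?thesis using assms by (cases "j = k") (auto simp: A_nth_k A_nth_other)
qed

lemma A_mult_transpose: "A ** transpose A = (\<chi> i i'. if i = i' then (if i = i0 then 5 else 1) else 0)"
proof -
  have "A $ i $ j * A $ i' $ j = (if j = f i then (if i = i' then 1 else 0) else 0)
      + (if j = k then (if i = i0 \<and> i' = i0 then 4 else 0) else 0)" for i i' j
    using k_not_in_range inj_f by (auto simp: spike_matrix_def inj_eq)
  then show ?thesis by (simp add: vec_eq_iff matrix_matrix_mult_def transpose_def sum.distrib)
qed

lemma pinv_A: "pinv A = transpose A ** (\<chi> i i'. if i = i' then (if i = i0 then 1/5 else 1) else 0)"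
  unfolding pinv_def A_mult_transpose
  by (rule arg_cong[where f = "(**) (transpose A)"], rule matrix_inv_eq)
    (simp_all add: diagonal_matrix_mult mat_def vec_eq_iff)

lemma pinv_A_nth: "pinv A $ r $ i = A $ i $ r / (if i = i0 then 5 else 1)"
  by (simp add: pinv_A matrix_matrix_mult_def transpose_def if_distrib sum.delta cong: if_cong)

lemma A_mult_pinv: "A ** pinv A = mat 1"
  unfolding pinv_A matrix_mul_assoc A_mult_transpose
  by (simp add: diagonal_matrix_mult mat_def vec_eq_iff)

lemma rank_A: "rank A = CARD('m)"
  using rank_bound[of A] rank_mul_le_left[of A "pinv A"] by (simp add: A_mult_pinv rank_I)

definition null_direction :: "real^'n" where
  "null_direction = 2 *\<^sub>R axis (f i0) 1 - axis k 1"

lemma A_mult_null_direction: "A *v null_direction = 0"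
  by (simp add: null_direction_def matrix_vector_mult_diff_distrib matrix_vector_mult_scaleR
      matrix_vector_mult_basis vec_eq_iff column_def A_nth_f A_nth_k)

lemma vnorm_pinv_column_shift:
  assumes "p \<noteq> \<infinity>"
  shows "vnorm p (column i0 (pinv A) + t *\<^sub>R null_direction) =
    (\<bar>1/5 + 2 * t\<bar> powr real_of_ereal p + \<bar>2 * (1/5) - t\<bar> powr real_of_ereal p) powr (1 / real_of_ereal p)"
proof -
  have fk: "f i0 \<noteq> k" using k_not_in_range by auto
  have "column i0 (pinv A) $ r = 0" if "r \<noteq> f i0" "r \<noteq> k" for r
    using that A_nth_f A_nth_other by (cases "r \<in> range f") (auto simp: column_def pinv_A_nth)
  then show ?thesis
    using vnorm_two_point_support[OF fk, of "column i0 (pinv A) + t *\<^sub>R null_direction" p] fk assms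
    by (simp add: null_direction_def column_def pinv_A_nth A_nth_f A_nth_k axis_def mult.commute)
qed

lemma exists_better_right_inverse:
  assumes "0 < p" "p \<noteq> \<infinity>" "p \<noteq> 2" "0 < q" "q \<noteq> \<infinity>"
  obtains Y where "Y \<in> ginvs A" "colnorm p q (Y ** A) < colnorm p q (pinv A ** A)"
proof -
  define P where "P = real_of_ereal p"
  have "0 < P" "P \<noteq> 2" using assms(1-3) by (cases p; auto simp: P_def)+
  then obtain t :: real
    where t: "\<bar>1/5 + 2 * t\<bar> powr P + \<bar>2 * (1/5) - t\<bar> powr P < (1/5) powr P + (2 * (1/5)) powr P"
    using powr_sum_not_minimal_on_line[of "1/5" P] by auto
  define x where "x = column i0 (pinv A)"
  define y where "y = x + t *\<^sub>R null_direction"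
  have shorter: "vnorm p y < vnorm p x"
    using vnorm_pinv_column_shift[OF assms(2), of t] vnorm_pinv_column_shift[OF assms(2), of 0]
      \<open>0 < P\<close> t by (simp add: x_def y_def P_def powr_less_mono2)
  define Y where "Y = pinv A + (\<chi> r i. if i = i0 then (t *\<^sub>R null_direction) $ r else 0)"
  have "Y \<in> ginvs A"
    unfolding ginvs_def Y_def
    by (simp add: right_inverse_add_null_column A_mult_pinv A_mult_null_direction matrix_vector_mult_scaleR)
  have col_Y: "column j (Y ** A) = column j (pinv A ** A) + A $ i0 $ j *s (t *\<^sub>R null_direction)" for j
    unfolding Y_def by (rule column_add_single_column_mult)
  have col_single: "column j (pinv A ** A) = A $ i0 $ j *s x" "column j (Y ** A) = A $ i0 $ j *s y"
    if "A $ i0 $ j \<noteq> 0" for j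
    using column_matrix_mult_single_row[of i0 A j "pinv A"] A_column_single_row[OF that] col_Y[of j]
    by (auto simp: x_def y_def vector_add_ldistrib)
  have "colnorm p q (Y ** A) < colnorm p q (pinv A ** A)"
  proof (rule colnorm_strict_mono[OF assms(4,5)])
    show "vnorm p (column j (Y ** A)) \<le> vnorm p (column j (pinv A ** A))" for j
    proof (cases "A $ i0 $ j = 0")
      case True
      then show ?thesis by (simp add: col_Y)
    next
      case False
      then show ?thesis
        using shorter unfolding col_single[OF False] vnorm_scale[OF assms(1)] by simp
    qed
    have "A $ i0 $ k \<noteq> 0" by (simp add: A_nth_k)
    then show "vnorm p (column k (Y ** A)) < vnorm p (column k (pinv A ** A))"
      using shorter unfolding col_single[OF \<open>A $ i0 $ k \<noteq> 0\<close>] vnorm_scale[OF assms(1)] by simp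
  qed
  with \<open>Y \<in> ginvs A\<close> show ?thesis by (rule that)
qed

lemma pinv_in_pginv_colnorm_iff:
  assumes "0 < p" "p \<noteq> \<infinity>" "0 < q" "q \<noteq> \<infinity>"
  shows "pinv A \<in> pginv (colnorm p q) A \<longleftrightarrow> p = 2"
proof
  assume "pinv A \<in> pginv (colnorm p q) A"
  then have minimal: "colnorm p q (pinv A ** A) \<le> colnorm p q (Y ** A)" if "Y \<in> ginvs A" for Y
    using that by (simp add: pginv_def)
  show "p = 2"
  proof (rule ccontr)
    assume "p \<noteq> 2"
    then obtain Y where "Y \<in> ginvs A" "colnorm p q (Y ** A) < colnorm p q (pinv A ** A)"
      using exists_better_right_inverse[OF assms(1,2) _ assms(3,4)] by blast
    then show False using minimal by fastforce
  qed
next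
  assume "p = 2"
  then show "pinv A \<in> pginv (colnorm p q) A"
    using pinv_in_pginv_colnorm_2[OF A_mult_pinv assms(3)] by simp
qed

end

lemma spike_exists:
  assumes "CARD('m) < CARD('n)"
  obtains f :: "'m::finite \<Rightarrow> 'n::finite" and k where "spike f k"
proof -
  obtain f :: "'m \<Rightarrow> 'n" where "inj f"
    using assms card_le_inj[of "UNIV :: 'm set" "UNIV :: 'n set"] by auto
  moreover have "card (range f) = CARD('m)" using \<open>inj f\<close> by (simp add: card_image)
  then have "range f \<noteq> UNIV" using assms by auto
  ultimately show ?thesis using that by (auto simp: spike_def)
qed

theorem theorem4:
  assumes "CARD('m::finite) < CARD('n::finite)"
  shows "(CARD('m) = 1 \<longrightarrow>
            (\<forall>(A :: real^'n^'m) p q. 0 < p \<and> 0 < q \<longrightarrow>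
               pginv (colnorm p q) A = ginv (entnorm p) A)
          \<and> (\<exists>A1 :: real^'n^'m. rank A1 = CARD('m) \<and>
               (\<forall>p q. 0 < p \<and> p < \<infinity> \<and> 0 < q \<longrightarrow>
                  (pinv A1 \<in> pginv (colnorm p q) A1 \<longleftrightarrow> p = 2))))
       \<and> (2 \<le> CARD('m) \<longrightarrow>
            (\<exists>A4 :: real^'n^'m. rank A4 = CARD('m) \<and>
               (\<forall>p q. 1 \<le> p \<and> p < \<infinity> \<and> 0 < q \<and> q < \<infinity> \<longrightarrow>
                  (pinv A4 \<in> pginv (colnorm p q) A4 \<longleftrightarrow> p = 2))))"
proof -
  obtain f :: "'m \<Rightarrow> 'n" and k where "spike f k" using spike_exists[OF assms] .
  fix i0 :: 'm
  interpret spike f k i0 by fact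
  define S where "S = spike_matrix f k i0"
  have S_iff: "pinv S \<in> pginv (colnorm p q) S \<longleftrightarrow> p = 2" if "0 < p" "p < \<infinity>" "0 < q" "q < \<infinity>" for p q
    using pinv_in_pginv_colnorm_iff that by (simp add: S_def)
  have single_row_witness: "\<exists>A1 :: real^'n^'m. rank A1 = CARD('m) \<and>
      (\<forall>p q. 0 < p \<and> p < \<infinity> \<and> 0 < q \<longrightarrow> (pinv A1 \<in> pginv (colnorm p q) A1 \<longleftrightarrow> p = 2))"
    if "CARD('m) = 1"
  proof (intro exI[of _ S] conjI allI impI)
    fix p q :: ereal assume "0 < p \<and> p < \<infinity> \<and> 0 < q"
    moreover have "pginv (colnorm p q) S = pginv (colnorm p 1) S"
      using pginv_colnorm_single_row[OF that, where A = S and p = p] calculation by simp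
    ultimately show "pinv S \<in> pginv (colnorm p q) S \<longleftrightarrow> p = 2" using S_iff[of p 1] by simp
  qed (simp add: S_def rank_A)
  have witness: "\<exists>A4 :: real^'n^'m. rank A4 = CARD('m) \<and>
      (\<forall>p q. 1 \<le> p \<and> p < \<infinity> \<and> 0 < q \<and> q < \<infinity> \<longrightarrow> (pinv A4 \<in> pginv (colnorm p q) A4 \<longleftrightarrow> p = 2))"
  proof (intro exI[of _ S] conjI allI impI)
    fix p q :: ereal assume pq: "1 \<le> p \<and> p < \<infinity> \<and> 0 < q \<and> q < \<infinity>"
    then have "0 < p" by (cases p) auto
    with pq show "pinv S \<in> pginv (colnorm p q) S \<longleftrightarrow> p = 2" by (simp add: S_iff)
  qed (simp add: S_def rank_A)
  show ?thesis
    using pginv_colnorm_single_row single_row_witness witness by blast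
qed

end
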